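(* Let $Z_p^{prim}(f)=\frac{C^R}{B_p}\sum_{j=1}^{B_p}\mathcal{L}(y_jf^Tx_j)+\rho R(f)-\eta\sum_{i\in\mathcal{N}_p}\Big(\big(f-\tfrac12(f_p(t)+f_i(t))\big)^T\epsilon^{pi}+\tfrac14\|\epsilon^{pi}\|^2\Big)$ for arbitrary vectors $f_p(t),f_i(t),\epsilon^{pi}\in\mathbb{R}^d$ (possibly random), and let $f^*_p=\arg\min_fZ_p^{prim}(f)$. Assume $R$ is twice differentiable with $\|\nabla^2R(f)\|\le\tau$ (operator norm) for all $f$, and that $\mathcal{L}'$ is continuous with $|\mathcal{L}'(a)-\mathcal{L}'(b)|\le c_4|a-b|$ for all $a,b$. Let $\alpha>0$ and let $\xi\in\mathbb{R}^d$ be a random vector with density proportional to $e^{-\zeta\|\xi\|}$, $\zeta=\frac{\rho B_p\alpha}{2C^R}$, and set $V^*_p=f^*_p+\xi$. Then for every $\delta\in(0,1)$, $$\mathbb{P}\Big(Z^{prim}_p(V^*_p)\le Z^{prim}_p(f^*_p)+\frac{4(C^R)^2d^2(\rho\tau+c_4C^R)\big(\ln(d/\delta)\big)^2}{\rho^2B_p^2\alpha^2}\Big)\ge1-\delta.$$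
   Context: $d,B_p\ge1$ integers, $C^R>0$, $\rho>0$, $\eta>0$, $\mathcal{N}_p$ a finite index set. The dataset $((x_j,y_j))_{j=1}^{B_p}$ is fixed with $\|x_j\|\le1$, $y_j\in\{-1,1\}$. The loss $\mathcal{L}:\mathbb{R}\to\mathbb{R}$ is convex and differentiable with $|\mathcal{L}'|\le1$; $R$ is 1-strongly convex. $\|\cdot\|$ is the Euclidean norm. *)

theory Defs
  imports "HOL-Analysis.Analysis"
begin

definition strongly_convex :: "real \<Rightarrow> ('a::real_normed_vector \<Rightarrow> real) \<Rightarrow> bool" where
  "strongly_convex \<mu> R \<longleftrightarrow>
     (\<forall>x y t. 0 \<le> t \<and> t \<le> 1 \<longrightarrow>
        R (t *\<^sub>R x + (1 - t) *\<^sub>R y)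
          \<le> t * R x + (1 - t) * R y - \<mu> / 2 * t * (1 - t) * (norm (x - y))\<^sup>2)"

definition norm_laplace :: "real \<Rightarrow> 'a::euclidean_space measure" where
  "norm_laplace \<zeta> = density lborel
     (\<lambda>\<xi>. ennreal (exp (- \<zeta> * norm \<xi>) / (\<integral>z. exp (- \<zeta> * norm (z::'a)) \<partial>lborel)))"

definition Zprim :: "real \<Rightarrow> nat \<Rightarrow> (real \<Rightarrow> real) \<Rightarrow> (nat \<Rightarrow> 'a::euclidean_space)
    \<Rightarrow> (nat \<Rightarrow> real) \<Rightarrow> real \<Rightarrow> ('a \<Rightarrow> real) \<Rightarrow> real \<Rightarrow> 'i set \<Rightarrow> 'a \<Rightarrow> ('i \<Rightarrow> 'a)
    \<Rightarrow> ('i \<Rightarrow> 'a) \<Rightarrow> 'a \<Rightarrow> real" where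
  "Zprim CR B L x y \<rho> R \<eta> N fp fi \<epsilon> f =
     CR / real B * (\<Sum>j = 1..B. L (y j * (f \<bullet> x j))) + \<rho> * R f
     - \<eta> * (\<Sum>i\<in>N. (f - (1/2) *\<^sub>R (fp + fi i)) \<bullet> \<epsilon> i + (1/4) * (norm (\<epsilon> i))\<^sup>2)"

end

theory Submission
  imports Defs "HOL-Real_Asymp.Real_Asymp" "HOL-Probability.Probability_Measure"
begin

text \<open>
  At the minimiser f* the derivative of Z vanishes, and that derivative is Lipschitz with
  constant K = \<rho>\<tau> + c4 C^R (the loss term through c4 and \<parallel>x_j\<parallel> \<le> 1, the regulariser through the
  Hessian bound). The descent lemma then gives Z(f* + \<xi>) \<le> Z(f*) + K/2 \<parallel>\<xi>\<parallel>^2, so it suffices that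
  \<parallel>\<xi>\<parallel> \<le> T = 4 d ln(d/\<delta>) / (3\<zeta>) with probability at least 1 - \<delta>. Writing e^(-\<zeta>\<parallel>z\<parallel>) as the
  integral of \<zeta> e^(-\<zeta>s) over s \<ge> \<parallel>z\<parallel> and integrating over balls first shows that \<parallel>\<xi>\<parallel> is
  Gamma(d, \<zeta>) distributed: P(\<parallel>\<xi>\<parallel> > t) = e^(-\<zeta>t) \<Sum>n<d. (\<zeta>t)^n / n!. Bounding the partial sum
  by 4^(d-1) e^(\<zeta>t/4) yields P(\<parallel>\<xi>\<parallel> > T) \<le> 4^(d-1) (\<delta>/d)^d \<le> \<delta>.
\<close>

section \<open>Radial integrals of the exponential\<close>

lemma has_real_derivative_exp_partial_sum:
  "((\<lambda>x. - exp (- x) * (\<Sum>n<Suc k. x ^ n / fact n)) has_real_derivative exp (- x) * x ^ k / fact k) (at x)"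
proof (induction k)
  case 0
  show ?case by (auto intro!: derivative_eq_intros)
next
  case (Suc k)
  have "((\<lambda>x. exp (- x) * x ^ Suc k) has_real_derivative
          exp (- x) * (real (Suc k) * x ^ k) - exp (- x) * x ^ Suc k) (at x)"
    by (auto intro!: derivative_eq_intros simp del: power_Suc)
  then have "((\<lambda>x. exp (- x) * x ^ Suc k / fact (Suc k)) has_real_derivative
          (exp (- x) * (real (Suc k) * x ^ k) - exp (- x) * x ^ Suc k) / fact (Suc k)) (at x)"
    by (rule DERIV_cdivide)
  also have "(exp (- x) * (real (Suc k) * x ^ k) - exp (- x) * x ^ Suc k) / fact (Suc k)
      = exp (- x) * x ^ k / fact k - exp (- x) * x ^ Suc k / fact (Suc k)"
    by (simp add: diff_divide_distrib del: of_nat_Suc)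
  finally have "((\<lambda>x. - exp (- x) * (\<Sum>n<Suc k. x ^ n / fact n) - exp (- x) * x ^ Suc k / fact (Suc k))
      has_real_derivative exp (- x) * x ^ Suc k / fact (Suc k)) (at x)"
    by (rule DERIV_diff[OF Suc.IH, THEN DERIV_cong]) (simp del: fact_Suc)
  then show ?case by (simp add: algebra_simps)
qed

lemma tendsto_exp_partial_sum_at_top:
  "((\<lambda>x::real. exp (- x) * (\<Sum>n<k. x ^ n / fact n)) \<longlongrightarrow> 0) at_top"
proof -
  have "((\<lambda>x::real. \<Sum>n<k. x ^ n / exp x / fact n) \<longlongrightarrow> (\<Sum>n<k. 0 / fact n)) at_top"
    by (intro tendsto_intros tendsto_power_div_exp_0) simp
  then show ?thesis by (simp add: sum_distrib_left exp_minus field_simps)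
qed

lemma nn_integral_exp_tail:
  fixes \<zeta> r :: real
  assumes "\<zeta> > 0"
  shows "(\<integral>\<^sup>+s. ennreal (\<zeta> * exp (- \<zeta> * s)) * indicator {r..} s \<partial>lborel) = ennreal (exp (- \<zeta> * r))"
proof -
  have "(\<integral>\<^sup>+s. ennreal (\<zeta> * exp (- \<zeta> * s)) * indicator {r..} s \<partial>lborel) = ennreal (0 - (- exp (- \<zeta> * r)))"
  proof (rule nn_integral_FTC_atLeast)
    show "((\<lambda>s. - exp (- \<zeta> * s)) \<longlongrightarrow> 0) at_top" using assms by real_asymp
  qed (use assms in \<open>auto intro!: derivative_eq_intros\<close>)
  then show ?thesis by simp
qed

lemma nn_integral_exp_times_power_diff:
  fixes \<zeta> t :: real
  assumes \<zeta>: "\<zeta> > 0" and t: "t \<ge> 0"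
  shows "(\<integral>\<^sup>+s. ennreal (\<zeta> * exp (- \<zeta> * s) * (s ^ d - t ^ d)) * indicator {t..} s \<partial>lborel)
     = ennreal (fact d / \<zeta> ^ d * exp (- \<zeta> * t) * (\<Sum>n<d. (\<zeta> * t) ^ n / fact n))"
proof (cases d)
  case 0
  then show ?thesis by simp
next
  case (Suc k)
  \<comment> \<open>integrating by parts reduces the \<open>s ^ d\<close> part to an Erlang integral of \<open>s ^ (d - 1) * exp (- \<zeta> * s)\<close>\<close>
  define G where "G u = - exp (- u) * (\<Sum>n<d. u ^ n / fact n)" for u :: real
  define F where "F s = fact d / \<zeta> ^ d * G (\<zeta> * s) - exp (- \<zeta> * s) * (s ^ d - t ^ d)" for s
  have "(\<integral>\<^sup>+s. ennreal (\<zeta> * exp (- \<zeta> * s) * (s ^ d - t ^ d)) * indicator {t..} s \<partial>lborel) = ennreal (0 - F t)"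
  proof (rule nn_integral_FTC_atLeast)
    show "(\<lambda>s. \<zeta> * exp (- \<zeta> * s) * (s ^ d - t ^ d)) \<in> borel_measurable borel" by measurable
    show "0 \<le> \<zeta> * exp (- \<zeta> * s) * (s ^ d - t ^ d)" if "t \<le> s" for s
      using \<zeta> t that by (auto intro!: mult_nonneg_nonneg power_mono)
    show "DERIV F s :> \<zeta> * exp (- \<zeta> * s) * (s ^ d - t ^ d)" for s
    proof -
      have "DERIV G (\<zeta> * s) :> exp (- (\<zeta> * s)) * (\<zeta> * s) ^ k / fact k"
        unfolding G_def Suc by (rule has_real_derivative_exp_partial_sum)
      from DERIV_chain2[OF this DERIV_cmult_Id]
      have "DERIV (\<lambda>s. G (\<zeta> * s)) s :> exp (- (\<zeta> * s)) * (\<zeta> * s) ^ k / fact k * \<zeta>" .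
      then have "DERIV F s :> fact d / \<zeta> ^ d * (exp (- (\<zeta> * s)) * (\<zeta> * s) ^ k / fact k * \<zeta>)
          - (- \<zeta> * exp (- \<zeta> * s) * (s ^ d - t ^ d) + exp (- \<zeta> * s) * (real d * s ^ k))"
        unfolding F_def Suc using \<zeta>
        by (auto intro!: derivative_eq_intros simp del: power_Suc)
      moreover have "fact d / \<zeta> ^ d * (exp (- (\<zeta> * s)) * (\<zeta> * s) ^ k / fact k * \<zeta>) = exp (- \<zeta> * s) * (real d * s ^ k)"
        using \<zeta> by (simp add: Suc power_mult_distrib field_simps del: of_nat_Suc)
      ultimately show ?thesis by (simp add: algebra_simps)
    qed
    have "((\<lambda>s. exp (- (\<zeta> * s)) * (\<Sum>n<d. (\<zeta> * s) ^ n / fact n)) \<longlongrightarrow> 0) at_top"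
      by (rule filterlim_compose[OF tendsto_exp_partial_sum_at_top
            filterlim_tendsto_pos_mult_at_top[OF tendsto_const \<zeta> filterlim_ident]])
    then have "((\<lambda>s. G (\<zeta> * s)) \<longlongrightarrow> 0) at_top"
      unfolding G_def using tendsto_minus by fastforce
    moreover have "((\<lambda>s. exp (- \<zeta> * s) * (s ^ d - t ^ d)) \<longlongrightarrow> 0) at_top"
      using \<zeta> by real_asymp
    ultimately have "(F \<longlongrightarrow> fact d / \<zeta> ^ d * 0 - 0) at_top"
      unfolding F_def by (intro tendsto_intros)
    then show "(F \<longlongrightarrow> 0) at_top" by simp
  qed
  also have "0 - F t = fact d / \<zeta> ^ d * exp (- \<zeta> * t) * (\<Sum>n<d. (\<zeta> * t) ^ n / fact n)"
    unfolding F_def G_def by simp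
  finally show ?thesis .
qed

lemma emeasure_cball_diff_cball:
  fixes s t :: real
  assumes t: "t \<ge> 0"
  shows "emeasure lborel (cball 0 s - cball (0::'a::euclidean_space) t)
       = ennreal (unit_ball_vol DIM('a) * (s ^ DIM('a) - t ^ DIM('a))) * indicator {t..} s"
proof (cases "t \<le> s")
  case True
  have "emeasure lborel (cball 0 s - cball (0::'a) t) = emeasure lborel (cball (0::'a) s) - emeasure lborel (cball (0::'a) t)"
    using True by (intro emeasure_Diff) (auto simp: emeasure_cball t)
  also have "\<dots> = ennreal (unit_ball_vol DIM('a) * s ^ DIM('a)) - ennreal (unit_ball_vol DIM('a) * t ^ DIM('a))"
    using True t by (simp add: emeasure_cball)
  also have "\<dots> = ennreal (unit_ball_vol DIM('a) * (s ^ DIM('a) - t ^ DIM('a)))"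
    using True t by (subst ennreal_minus) (auto simp: algebra_simps intro!: mult_left_mono power_mono)
  finally show ?thesis using True by simp
next
  case False
  then have empty: "cball 0 s - cball (0::'a) t = {}" by auto
  show ?thesis using False unfolding empty by simp
qed

lemma nn_integral_exp_norm_outside_cball:
  fixes \<zeta> t :: real
  assumes \<zeta>: "\<zeta> > 0" and t: "t \<ge> 0"
  shows "(\<integral>\<^sup>+z. ennreal (exp (- \<zeta> * norm z)) * indicator {z::'a::euclidean_space. t < norm z} z \<partial>lborel)
     = ennreal (unit_ball_vol DIM('a) * (fact DIM('a) / \<zeta> ^ DIM('a) * exp (- \<zeta> * t)
                  * (\<Sum>n<DIM('a). (\<zeta> * t) ^ n / fact n)))"
proof -
  define d where "d = DIM('a)"
  define W where "W = unit_ball_vol (real d)"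
  have W: "W > 0" unfolding W_def by simp
  have "(\<integral>\<^sup>+z. ennreal (exp (- \<zeta> * norm z)) * indicator {z::'a. t < norm z} z \<partial>lborel)
     = (\<integral>\<^sup>+z. (\<integral>\<^sup>+s. ennreal (\<zeta> * exp (- \<zeta> * s)) * indicator {norm z..} s * indicator {z::'a. t < norm z} z \<partial>lborel) \<partial>lborel)"
    by (intro nn_integral_cong, subst nn_integral_multc, simp, subst nn_integral_exp_tail[OF \<zeta>], simp)
  also have "\<dots> = (\<integral>\<^sup>+s. (\<integral>\<^sup>+z. ennreal (\<zeta> * exp (- \<zeta> * s)) * indicator {norm z..} s * indicator {z::'a. t < norm z} z \<partial>lborel) \<partial>lborel)"
  proof (rule lborel_pair.Fubini'[symmetric])
    have "(\<lambda>(z::'a, s::real). ennreal (\<zeta> * exp (- \<zeta> * s)) * indicator {norm z..} s * indicator {z::'a. t < norm z} z)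
      = (\<lambda>p. ennreal (\<zeta> * exp (- \<zeta> * snd p)) * indicator {p. norm (fst p) \<le> snd p} p * indicator {p. t < norm (fst p)} p)"
      by (auto simp: fun_eq_iff split: split_indicator)
    then show "(\<lambda>(z::'a, s::real). ennreal (\<zeta> * exp (- \<zeta> * s)) * indicator {norm z..} s * indicator {z::'a. t < norm z} z)
        \<in> borel_measurable (lborel \<Otimes>\<^sub>M lborel)"
      by simp
  qed
  also have "\<dots> = (\<integral>\<^sup>+s. ennreal W * (ennreal (\<zeta> * exp (- \<zeta> * s) * (s ^ d - t ^ d)) * indicator {t..} s) \<partial>lborel)"
  proof (intro nn_integral_cong)
    fix s :: real
    have "(\<integral>\<^sup>+z. ennreal (\<zeta> * exp (- \<zeta> * s)) * indicator {norm z..} s * indicator {z::'a. t < norm z} z \<partial>lborel)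
       = (\<integral>\<^sup>+z. ennreal (\<zeta> * exp (- \<zeta> * s)) * indicator (cball 0 s - cball (0::'a) t) z \<partial>lborel)"
      by (intro nn_integral_cong) (auto split: split_indicator)
    also have "\<dots> = ennreal (\<zeta> * exp (- \<zeta> * s)) * emeasure lborel (cball 0 s - cball (0::'a) t)"
      by (rule nn_integral_cmult_indicator) simp
    finally show "(\<integral>\<^sup>+z. ennreal (\<zeta> * exp (- \<zeta> * s)) * indicator {norm z..} s * indicator {z::'a. t < norm z} z \<partial>lborel)
       = ennreal W * (ennreal (\<zeta> * exp (- \<zeta> * s) * (s ^ d - t ^ d)) * indicator {t..} s)"
      using W \<zeta> unfolding emeasure_cball_diff_cball[OF t] W_def d_def by (simp add: ennreal_mult' mult_ac)
  qed
  also have "\<dots> = ennreal W * ennreal (fact d / \<zeta> ^ d * exp (- \<zeta> * t) * (\<Sum>n<d. (\<zeta> * t) ^ n / fact n))"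
    by (subst nn_integral_cmult, simp, subst nn_integral_exp_times_power_diff[OF \<zeta> t], simp)
  also have "\<dots> = ennreal (W * (fact d / \<zeta> ^ d * exp (- \<zeta> * t) * (\<Sum>n<d. (\<zeta> * t) ^ n / fact n)))"
    using W by (subst ennreal_mult') auto
  finally show ?thesis unfolding W_def d_def .
qed

lemma nn_integral_exp_norm:
  fixes \<zeta> :: real
  assumes \<zeta>: "\<zeta> > 0"
  shows "(\<integral>\<^sup>+z. ennreal (exp (- \<zeta> * norm z)) \<partial>(lborel::'a::euclidean_space measure))
     = ennreal (unit_ball_vol DIM('a) * (fact DIM('a) / \<zeta> ^ DIM('a)))"
proof -
  obtain k where k: "DIM('a) = Suc k" using DIM_positive[where 'a='a] by (metis Suc_pred)
  have "(\<integral>\<^sup>+z. ennreal (exp (- \<zeta> * norm z)) \<partial>(lborel::'a measure))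
      = (\<integral>\<^sup>+z. ennreal (exp (- \<zeta> * norm z)) * indicator {z::'a. 0 < norm z} z \<partial>lborel)"
    by (intro nn_integral_cong_AE eventually_mono[OF AE_lborel_singleton[of 0]]) auto
  also have "\<dots> = ennreal (unit_ball_vol DIM('a) * (fact DIM('a) / \<zeta> ^ DIM('a)))"
    unfolding nn_integral_exp_norm_outside_cball[OF \<zeta> order.refl] k
    by (simp add: sum.lessThan_Suc_shift del: sum.lessThan_Suc)
  finally show ?thesis .
qed

lemma emeasure_norm_laplace:
  fixes \<zeta> :: real
  assumes \<zeta>: "\<zeta> > 0" and A: "A \<in> sets borel"
  shows "emeasure (norm_laplace \<zeta> :: 'a::euclidean_space measure) A
      = (\<integral>\<^sup>+z. ennreal (exp (- \<zeta> * norm z)) * indicator A z \<partial>lborel)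
          * ennreal (\<zeta> ^ DIM('a) / (unit_ball_vol DIM('a) * fact DIM('a)))"
proof -
  define C where "C = unit_ball_vol DIM('a) * (fact DIM('a) / \<zeta> ^ DIM('a))"
  have C: "C > 0" unfolding C_def using \<zeta> by simp
  have "(\<integral>z. exp (- \<zeta> * norm z) \<partial>(lborel::'a measure)) = C"
    using nn_integral_exp_norm[where 'a='a, OF \<zeta>] C unfolding C_def[symmetric]
    by (intro has_bochner_integral_integral_eq has_bochner_integral_nn_integral) auto
  then have "emeasure (norm_laplace \<zeta> :: 'a measure) A
      = (\<integral>\<^sup>+z. ennreal (exp (- \<zeta> * norm z) / C) * indicator A z \<partial>lborel)"
    unfolding norm_laplace_def using A by (subst emeasure_density) auto
  also have "\<dots> = (\<integral>\<^sup>+z. ennreal (exp (- \<zeta> * norm z)) * indicator A z * ennreal (1 / C) \<partial>lborel)"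
    using C by (intro nn_integral_cong) (simp add: ennreal_mult' divide_inverse mult_ac)
  also have "\<dots> = (\<integral>\<^sup>+z. ennreal (exp (- \<zeta> * norm z)) * indicator A z \<partial>lborel) * ennreal (1 / C)"
    using A by (intro nn_integral_multc) auto
  finally show ?thesis unfolding C_def by simp
qed

lemma prob_space_norm_laplace:
  fixes \<zeta> :: real
  assumes \<zeta>: "\<zeta> > 0"
  shows "prob_space (norm_laplace \<zeta> :: 'a::euclidean_space measure)"
proof (rule prob_spaceI)
  have W: "unit_ball_vol (real DIM('a)) \<noteq> 0"
    using unit_ball_vol_pos[of "real DIM('a)"] by linarith
  have "emeasure (norm_laplace \<zeta> :: 'a measure) UNIV = 1"
    using emeasure_norm_laplace[where 'a='a, OF \<zeta>, of UNIV] nn_integral_exp_norm[where 'a='a, OF \<zeta>] \<zeta>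
    by (simp add: W ennreal_mult'[symmetric])
  then show "emeasure (norm_laplace \<zeta> :: 'a measure) (space (norm_laplace \<zeta>)) = 1"
    by (simp add: norm_laplace_def)
qed

lemma measure_norm_laplace_norm_gt:
  fixes \<zeta> t :: real
  assumes \<zeta>: "\<zeta> > 0" and t: "t \<ge> 0"
  shows "measure (norm_laplace \<zeta> :: 'a::euclidean_space measure) {z. t < norm z}
           = exp (- \<zeta> * t) * (\<Sum>n<DIM('a). (\<zeta> * t) ^ n / fact n)"
proof -
  define W where "W = unit_ball_vol DIM('a) * fact DIM('a)"
  have W: "W > 0" unfolding W_def by simp
  have "emeasure (norm_laplace \<zeta> :: 'a measure) {z. t < norm z}
      = ennreal (W / \<zeta> ^ DIM('a) * exp (- \<zeta> * t) * (\<Sum>n<DIM('a). (\<zeta> * t) ^ n / fact n))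
        * ennreal (\<zeta> ^ DIM('a) / W)"
    using emeasure_norm_laplace[where 'a='a, OF \<zeta>, of "{z. t < norm z}"]
      nn_integral_exp_norm_outside_cball[where 'a='a, OF \<zeta> t]
    unfolding W_def by (simp add: ac_simps)
  also have "\<dots> = ennreal (exp (- \<zeta> * t) * (\<Sum>n<DIM('a). (\<zeta> * t) ^ n / fact n))"
    using \<zeta> t W by (subst ennreal_mult'[symmetric]) (auto intro!: sum_nonneg divide_nonneg_pos mult_nonneg_nonneg)
  finally show ?thesis
    unfolding measure_def using \<zeta> t by (simp add: sum_nonneg)
qed

section \<open>A tail bound for the norm-Laplace distribution\<close>

lemma partial_sum_exp_le: "(x::real) \<ge> 0 \<Longrightarrow> (\<Sum>n<k. x ^ n / fact n) \<le> exp x"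
  using sum_le_suminf[OF summable_exp_generic[of x], of "{..<k}"]
  by (simp add: exp_def divide_inverse ac_simps)

lemma four_power_le_self_power: "(d::nat) \<ge> 1 \<Longrightarrow> 4 ^ (d - 1) \<le> d ^ d"
proof (cases "d \<le> 3")
  case True
  moreover assume "d \<ge> 1"
  ultimately have "d = 1 \<or> d = 2 \<or> d = 3" by auto
  then show ?thesis by auto
next
  case False
  then have "4 ^ (d - 1) \<le> d ^ (d - 1)" by (intro power_mono) auto
  also have "\<dots> \<le> d ^ d" using False by (intro power_increasing) auto
  finally show ?thesis .
qed

lemma four_power_times_power_div_le:
  fixes \<delta> :: real
  assumes d: "d \<ge> 1" and \<delta>: "0 \<le> \<delta>" "\<delta> \<le> 1"
  shows "4 ^ (d - 1) * (\<delta> / d) ^ d \<le> \<delta>"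
proof -
  have "4 ^ (d - 1) * (\<delta> / d) ^ d = \<delta> * \<delta> ^ (d - 1) * (4 ^ (d - 1) / real d ^ d)"
    using d by (cases d) (simp_all add: power_divide)
  also have "\<dots> \<le> \<delta> * 1 * 1"
  proof (intro mult_left_mono mult_mono)
    have "real (4 ^ (d - 1)) \<le> real (d ^ d)"
      using four_power_le_self_power[OF d] by linarith
    then show "4 ^ (d - 1) / real d ^ d \<le> 1" using d by (simp add: divide_le_eq)
  qed (use \<delta> in \<open>auto intro: power_le_one\<close>)
  finally show ?thesis by simp
qed

lemma exp_neg_mult_partial_sum_le:
  fixes u :: real
  assumes u: "u \<ge> 0"
  shows "exp (- u) * (\<Sum>n<d. u ^ n / fact n) \<le> 4 ^ (d - 1) * exp (- (3/4) * u)"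
proof -
  have "(\<Sum>n<d. u ^ n / fact n) \<le> (\<Sum>n<d. 4 ^ (d - 1) * ((u/4) ^ n / fact n))"
  proof (intro sum_mono)
    fix n assume "n \<in> {..<d}"
    then have "u ^ n = 4 ^ n * (u/4) ^ n" and "(4::real) ^ n \<le> 4 ^ (d - 1)"
      by (auto simp: power_divide intro!: power_increasing)
    then show "u ^ n / fact n \<le> 4 ^ (d - 1) * ((u/4) ^ n / fact n)"
      using u by (simp add: mult_right_mono divide_right_mono)
  qed
  also have "\<dots> \<le> 4 ^ (d - 1) * exp (u/4)"
    unfolding sum_distrib_left[symmetric] using u by (intro mult_left_mono partial_sum_exp_le) auto
  finally have "exp (- u) * (\<Sum>n<d. u ^ n / fact n) \<le> exp (- u) * (4 ^ (d - 1) * exp (u/4))"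
    by (intro mult_left_mono) auto
  also have "\<dots> = 4 ^ (d - 1) * exp (- u + u/4)"
    by (simp add: mult_exp_exp mult_ac)
  also have "exp (- u + u/4) = exp (- (3/4) * u)"
    by (intro arg_cong[where f=exp]) linarith
  finally show ?thesis .
qed

lemma measure_norm_laplace_norm_le_ge:
  fixes \<zeta> \<delta> :: real
  assumes \<zeta>: "\<zeta> > 0" and \<delta>: "0 < \<delta>" "\<delta> < 1"
  defines "T \<equiv> 4/3 * DIM('a) * ln (DIM('a) / \<delta>) / \<zeta>"
  shows "measure (norm_laplace \<zeta> :: 'a::euclidean_space measure) {\<xi>. norm \<xi> \<le> T} \<ge> 1 - \<delta>"
proof -
  interpret prob_space "norm_laplace \<zeta> :: 'a measure" by (rule prob_space_norm_laplace[OF \<zeta>])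
  define d where "d = DIM('a)"
  have d: "d \<ge> 1" unfolding d_def by (simp add: DIM_positive Suc_leI)
  have "real d / \<delta> > 1" using d \<delta> by (simp add: field_simps)
  then have l: "ln (d / \<delta>) > 0" and exp_ln: "exp (- ln (d / \<delta>)) = \<delta> / d"
    using \<delta> by (simp_all add: exp_minus)
  have T: "T \<ge> 0" unfolding T_def using \<zeta> l by (simp add: d_def)
  have "prob {\<xi>. T < norm \<xi>} = exp (- (\<zeta> * T)) * (\<Sum>n<d. (\<zeta> * T) ^ n / fact n)"
    unfolding d_def using measure_norm_laplace_norm_gt[OF \<zeta> T] by simp
  also have "\<dots> \<le> 4 ^ (d - 1) * exp (- (3/4) * (\<zeta> * T))"
    using \<zeta> T by (intro exp_neg_mult_partial_sum_le) simp
  also have "exp (- (3/4) * (\<zeta> * T)) = (\<delta> / d) ^ d"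
    using \<zeta> unfolding T_def d_def[symmetric] exp_ln[symmetric] exp_of_nat_mult[symmetric]
    by (simp add: algebra_simps)
  also have "4 ^ (d - 1) * (\<delta> / d) ^ d \<le> \<delta>"
    using d \<delta> by (intro four_power_times_power_div_le) auto
  finally have tail: "prob {\<xi>. T < norm \<xi>} \<le> \<delta>" by simp
  have "{\<xi>. norm \<xi> \<le> T} = space (norm_laplace \<zeta>) - {\<xi>::'a. T < norm \<xi>}"
    by (auto simp: norm_laplace_def)
  moreover have "{\<xi>::'a. T < norm \<xi>} \<in> events"
    unfolding norm_laplace_def sets_density sets_lborel by measurable
  ultimately have "prob {\<xi>. norm \<xi> \<le> T} = 1 - prob {\<xi>. T < norm \<xi>}"
    by (simp only: prob_compl)
  with tail show ?thesis by simp
qed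

section \<open>Quadratic growth of the objective around its minimiser\<close>

lemma descent_lemma:
  fixes Z :: "'a::real_normed_vector \<Rightarrow> real"
  assumes deriv: "\<And>f. (Z has_derivative Z' f) (at f)"
    and increment: "\<And>s. 0 \<le> s \<Longrightarrow> s \<le> 1 \<Longrightarrow> Z' (f + s *\<^sub>R \<xi>) \<xi> - Z' f \<xi> \<le> K * s * (norm \<xi>)\<^sup>2"
  shows "Z (f + \<xi>) \<le> Z f + Z' f \<xi> + K / 2 * (norm \<xi>)\<^sup>2"
proof -
  have line: "DERIV (\<lambda>s. Z (f + s *\<^sub>R \<xi>)) s :> Z' (f + s *\<^sub>R \<xi>) \<xi>" for s
  proof -
    have "((\<lambda>s. Z (f + s *\<^sub>R \<xi>)) has_derivative (\<lambda>h. Z' (f + s *\<^sub>R \<xi>) (h *\<^sub>R \<xi>))) (at s)"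
      by (rule has_derivative_compose[OF _ deriv]) (auto intro!: derivative_eq_intros)
    moreover have "linear (Z' (f + s *\<^sub>R \<xi>))" using deriv by (rule has_derivative_linear)
    ultimately show ?thesis by (simp add: has_field_derivative_def linear_scale mult_commute_abs)
  qed
  define g where "g s = Z (f + s *\<^sub>R \<xi>) - s * Z' f \<xi> - K / 2 * s\<^sup>2 * (norm \<xi>)\<^sup>2" for s
  have "g 1 \<le> g 0"
  proof (rule DERIV_nonpos_imp_nonincreasing[of 0 1 g])
    fix s :: real
    assume s: "0 \<le> s" "s \<le> 1"
    have "DERIV g s :> Z' (f + s *\<^sub>R \<xi>) \<xi> - Z' f \<xi> - K / 2 * (2 * s) * (norm \<xi>)\<^sup>2"
      unfolding g_def by (auto intro!: derivative_eq_intros line)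
    moreover have "Z' (f + s *\<^sub>R \<xi>) \<xi> - Z' f \<xi> - K / 2 * (2 * s) * (norm \<xi>)\<^sup>2 \<le> 0"
      using increment[OF s] by simp
    ultimately show "\<exists>D. DERIV g s :> D \<and> D \<le> 0" by blast
  qed simp
  then show ?thesis by (simp add: g_def)
qed

lemma inner_increment_le_of_onorm_deriv_le:
  fixes G :: "'a::real_inner \<Rightarrow> 'a"
  assumes deriv: "\<And>f. (G has_derivative G' f) (at f)"
    and bound: "\<And>f. onorm (G' f) \<le> \<tau>"
  shows "(G (f + s *\<^sub>R \<xi>) - G f) \<bullet> \<xi> \<le> \<tau> * \<bar>s\<bar> * (norm \<xi>)\<^sup>2"
proof -
  have "(G (f + s *\<^sub>R \<xi>) - G f) \<bullet> \<xi> \<le> norm (G (f + s *\<^sub>R \<xi>) - G f) * norm \<xi>"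
    by (rule order_trans[OF abs_ge_self Cauchy_Schwarz_ineq2])
  also have "\<dots> \<le> \<tau> * norm ((f + s *\<^sub>R \<xi>) - f) * norm \<xi>"
    by (intro mult_right_mono differentiable_bound[of UNIV G G'])
       (auto intro: has_derivative_at_withinI deriv bound)
  finally show ?thesis by (simp add: power2_eq_square mult_ac)
qed

lemma loss_deriv_increment_le:
  fixes L' :: "real \<Rightarrow> real" and x f \<xi> :: "'a::real_inner"
  assumes lip: "\<And>a b. \<bar>L' a - L' b\<bar> \<le> c4 * \<bar>a - b\<bar>"
    and x: "norm x \<le> 1" and y: "\<bar>y\<bar> = 1"
  shows "(L' (y * ((f + s *\<^sub>R \<xi>) \<bullet> x)) - L' (y * (f \<bullet> x))) * (y * (\<xi> \<bullet> x))
           \<le> c4 * \<bar>s\<bar> * (norm \<xi>)\<^sup>2"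
proof -
  have c4: "c4 \<ge> 0" using lip[of 1 0] by simp
  have \<xi>x: "\<bar>\<xi> \<bullet> x\<bar> \<le> norm \<xi>"
    using Cauchy_Schwarz_ineq2[of \<xi> x] x mult_left_le[of "norm x" "norm \<xi>"] by simp
  have "(L' (y * ((f + s *\<^sub>R \<xi>) \<bullet> x)) - L' (y * (f \<bullet> x))) * (y * (\<xi> \<bullet> x))
      \<le> \<bar>L' (y * ((f + s *\<^sub>R \<xi>) \<bullet> x)) - L' (y * (f \<bullet> x))\<bar> * \<bar>y * (\<xi> \<bullet> x)\<bar>"
    by (metis abs_ge_self abs_mult)
  also have "\<dots> \<le> c4 * \<bar>y * ((f + s *\<^sub>R \<xi>) \<bullet> x) - y * (f \<bullet> x)\<bar> * \<bar>y * (\<xi> \<bullet> x)\<bar>"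
    by (intro mult_right_mono lip) auto
  also have "\<dots> = c4 * \<bar>s\<bar> * \<bar>\<xi> \<bullet> x\<bar>\<^sup>2"
    using y by (simp add: inner_add_left algebra_simps abs_mult power2_eq_square)
  also have "\<dots> \<le> c4 * \<bar>s\<bar> * (norm \<xi>)\<^sup>2"
    using c4 \<xi>x by (intro mult_left_mono power_mono) auto
  finally show ?thesis .
qed

definition Zprim_deriv :: "real \<Rightarrow> nat \<Rightarrow> (real \<Rightarrow> real) \<Rightarrow> (nat \<Rightarrow> 'a::euclidean_space)
    \<Rightarrow> (nat \<Rightarrow> real) \<Rightarrow> real \<Rightarrow> ('a \<Rightarrow> 'a) \<Rightarrow> real \<Rightarrow> 'i set \<Rightarrow> ('i \<Rightarrow> 'a) \<Rightarrow> 'a \<Rightarrow> 'a \<Rightarrow> real" where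
  "Zprim_deriv CR B L' x y \<rho> gradR \<eta> N \<epsilon> f h =
     CR / real B * (\<Sum>j = 1..B. L' (y j * (f \<bullet> x j)) * (y j * (h \<bullet> x j))) + \<rho> * (gradR f \<bullet> h)
     - \<eta> * (\<Sum>i\<in>N. h \<bullet> \<epsilon> i)"

lemma has_derivative_Zprim:
  assumes L_deriv: "\<And>a. (L has_real_derivative L' a) (at a)"
    and R_grad: "\<And>f. (R has_derivative (\<lambda>h. gradR f \<bullet> h)) (at f)"
  shows "(Zprim CR B L x y \<rho> R \<eta> N fp fi \<epsilon> has_derivative Zprim_deriv CR B L' x y \<rho> gradR \<eta> N \<epsilon> f) (at f)"
proof -
  have loss: "((\<lambda>f. L (y j * (f \<bullet> x j))) has_derivative (\<lambda>h. L' (y j * (f \<bullet> x j)) * (y j * (h \<bullet> x j)))) (at f)"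
    for j f
  proof -
    have "((\<lambda>f. L (y j * (f \<bullet> x j))) has_derivative (\<lambda>h. y j * (h \<bullet> x j) * L' (y j * (f \<bullet> x j)))) (at f)"
      by (rule DERIV_compose_FDERIV[OF L_deriv]) (auto intro!: derivative_eq_intros)
    then show ?thesis by (simp add: mult_ac)
  qed
  show ?thesis
    unfolding Zprim_def[abs_def] Zprim_deriv_def[abs_def]
    by (rule has_derivative_eq_rhs, (rule derivative_eq_intros loss R_grad refl | assumption)+)
       (simp add: fun_eq_iff)
qed

lemma Zprim_deriv_increment_le:
  assumes B: "B \<ge> 1" and CR: "CR \<ge> 0" and \<rho>: "\<rho> \<ge> 0"
    and x: "\<And>j. j \<in> {1..B} \<Longrightarrow> norm (x j) \<le> 1"
    and y: "\<And>j. j \<in> {1..B} \<Longrightarrow> y j \<in> {-1, 1}"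
    and L'_lip: "\<And>a b. \<bar>L' a - L' b\<bar> \<le> c4 * \<bar>a - b\<bar>"
    and R_hess: "\<And>f. (gradR has_derivative HessR f) (at f)"
    and R_hess_bound: "\<And>f. onorm (HessR f) \<le> \<tau>"
  shows "Zprim_deriv CR B L' x y \<rho> gradR \<eta> N \<epsilon> (f + s *\<^sub>R \<xi>) \<xi> - Zprim_deriv CR B L' x y \<rho> gradR \<eta> N \<epsilon> f \<xi>
           \<le> (\<rho> * \<tau> + c4 * CR) * \<bar>s\<bar> * (norm \<xi>)\<^sup>2"
proof -
  have "Zprim_deriv CR B L' x y \<rho> gradR \<eta> N \<epsilon> (f + s *\<^sub>R \<xi>) \<xi> - Zprim_deriv CR B L' x y \<rho> gradR \<eta> N \<epsilon> f \<xi>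
      = CR / real B * (\<Sum>j = 1..B. (L' (y j * ((f + s *\<^sub>R \<xi>) \<bullet> x j)) - L' (y j * (f \<bullet> x j))) * (y j * (\<xi> \<bullet> x j)))
        + \<rho> * ((gradR (f + s *\<^sub>R \<xi>) - gradR f) \<bullet> \<xi>)"
    unfolding Zprim_deriv_def by (simp add: algebra_simps sum_subtractf inner_diff_left)
  also have "\<dots> \<le> CR / real B * (\<Sum>j = 1..B. c4 * \<bar>s\<bar> * (norm \<xi>)\<^sup>2) + \<rho> * (\<tau> * \<bar>s\<bar> * (norm \<xi>)\<^sup>2)"
  proof (intro add_mono mult_left_mono sum_mono loss_deriv_increment_le
      inner_increment_le_of_onorm_deriv_le[OF R_hess R_hess_bound])
    fix j
    assume j: "j \<in> {1..B}"
    show "norm (x j) \<le> 1" using x[OF j] .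
    show "\<bar>y j\<bar> = 1" using y[OF j] by auto
  qed (use CR \<rho> L'_lip in auto)
  also have "\<dots> = (\<rho> * \<tau> + c4 * CR) * \<bar>s\<bar> * (norm \<xi>)\<^sup>2"
    using B by (simp add: field_simps)
  finally show ?thesis .
qed

lemma Zprim_le_at_minimiser:
  assumes B: "B \<ge> 1" and CR: "CR \<ge> 0" and \<rho>: "\<rho> \<ge> 0"
    and x: "\<And>j. j \<in> {1..B} \<Longrightarrow> norm (x j) \<le> 1"
    and y: "\<And>j. j \<in> {1..B} \<Longrightarrow> y j \<in> {-1, 1}"
    and L_deriv: "\<And>a. (L has_real_derivative L' a) (at a)"
    and L'_lip: "\<And>a b. \<bar>L' a - L' b\<bar> \<le> c4 * \<bar>a - b\<bar>"
    and R_grad: "\<And>f. (R has_derivative (\<lambda>h. gradR f \<bullet> h)) (at f)"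
    and R_hess: "\<And>f. (gradR has_derivative HessR f) (at f)"
    and R_hess_bound: "\<And>f. onorm (HessR f) \<le> \<tau>"
    and fstar: "\<And>f. Zprim CR B L x y \<rho> R \<eta> N fp fi \<epsilon> fstar \<le> Zprim CR B L x y \<rho> R \<eta> N fp fi \<epsilon> f"
  shows "Zprim CR B L x y \<rho> R \<eta> N fp fi \<epsilon> (fstar + \<xi>)
         \<le> Zprim CR B L x y \<rho> R \<eta> N fp fi \<epsilon> fstar + (\<rho> * \<tau> + c4 * CR) / 2 * (norm \<xi>)\<^sup>2"
proof -
  have deriv: "\<And>f. (Zprim CR B L x y \<rho> R \<eta> N fp fi \<epsilon> has_derivative Zprim_deriv CR B L' x y \<rho> gradR \<eta> N \<epsilon> f) (at f)"
    by (rule has_derivative_Zprim[OF L_deriv R_grad])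
  have "Zprim_deriv CR B L' x y \<rho> gradR \<eta> N \<epsilon> fstar = (\<lambda>h. 0)"
    by (rule differential_zero_maxmin[OF UNIV_I open_UNIV deriv]) (use fstar in auto)
  moreover have "Zprim_deriv CR B L' x y \<rho> gradR \<eta> N \<epsilon> (fstar + s *\<^sub>R \<xi>) \<xi>
      - Zprim_deriv CR B L' x y \<rho> gradR \<eta> N \<epsilon> fstar \<xi> \<le> (\<rho> * \<tau> + c4 * CR) * \<bar>s\<bar> * (norm \<xi>)\<^sup>2" for s
    by (rule Zprim_deriv_increment_le[OF B CR \<rho> x y L'_lip R_hess R_hess_bound])
  then have "Zprim CR B L x y \<rho> R \<eta> N fp fi \<epsilon> (fstar + \<xi>)
      \<le> Zprim CR B L x y \<rho> R \<eta> N fp fi \<epsilon> fstar + Zprim_deriv CR B L' x y \<rho> gradR \<eta> N \<epsilon> fstar \<xi>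
        + (\<rho> * \<tau> + c4 * CR) / 2 * (norm \<xi>)\<^sup>2"
    by (intro descent_lemma[OF deriv]) (metis abs_of_nonneg)
  ultimately show ?thesis by simp
qed

lemma borel_measurable_Zprim:
  assumes "\<And>a. (L has_real_derivative L' a) (at a)"
    and "\<And>f. (R has_derivative (\<lambda>h. gradR f \<bullet> h)) (at f)"
  shows "Zprim CR B L x y \<rho> R \<eta> N fp fi \<epsilon> \<in> borel_measurable borel"
  by (intro borel_measurable_continuous_onI continuous_at_imp_continuous_on ballI
      has_derivative_continuous[OF has_derivative_Zprim[OF assms]])

theorem lemma12:
  fixes CR \<rho> \<eta> \<tau> c4 \<alpha> \<delta> :: real
    and B :: nat
    and x :: "nat \<Rightarrow> 'a::euclidean_space" and y :: "nat \<Rightarrow> real"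
    and L L' :: "real \<Rightarrow> real"
    and R :: "'a \<Rightarrow> real" and gradR :: "'a \<Rightarrow> 'a" and HessR :: "'a \<Rightarrow> 'a \<Rightarrow> 'a"
    and N :: "'i set" and fp :: 'a and fi \<epsilon> :: "'i \<Rightarrow> 'a"
    and fstar :: 'a
  assumes B: "B \<ge> 1"
    and CR: "CR > 0" and rho: "\<rho> > 0" and eta: "\<eta> > 0"
    and N: "finite N"
    and x: "\<And>j. j \<in> {1..B} \<Longrightarrow> norm (x j) \<le> 1"
    and y: "\<And>j. j \<in> {1..B} \<Longrightarrow> y j \<in> {-1, 1}"
    and L_convex: "convex_on UNIV L"
    and L_deriv: "\<And>a. (L has_real_derivative L' a) (at a)"
    and L'_bound: "\<And>a. \<bar>L' a\<bar> \<le> 1"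
    and L'_cont: "continuous_on UNIV L'"
    and L'_lip: "\<And>a b. \<bar>L' a - L' b\<bar> \<le> c4 * \<bar>a - b\<bar>"
    and R_sc: "strongly_convex 1 R"
    and R_grad: "\<And>f. (R has_derivative (\<lambda>h. gradR f \<bullet> h)) (at f)"
    and R_hess: "\<And>f. (gradR has_derivative HessR f) (at f)"
    and R_hess_bound: "\<And>f. onorm (HessR f) \<le> \<tau>"
    and fstar: "\<And>f. Zprim CR B L x y \<rho> R \<eta> N fp fi \<epsilon> fstar
                     \<le> Zprim CR B L x y \<rho> R \<eta> N fp fi \<epsilon> f"
    and alpha: "\<alpha> > 0"
    and delta: "0 < \<delta>" "\<delta> < 1"
  shows "measure (norm_laplace (\<rho> * real B * \<alpha> / (2 * CR)))
           {\<xi>. Zprim CR B L x y \<rho> R \<eta> N fp fi \<epsilon> (fstar + \<xi>)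
                \<le> Zprim CR B L x y \<rho> R \<eta> N fp fi \<epsilon> fstar
                  + 4 * CR\<^sup>2 * (real DIM('a))\<^sup>2 * (\<rho> * \<tau> + c4 * CR)
                    * (ln (real DIM('a) / \<delta>))\<^sup>2 / (\<rho>\<^sup>2 * (real B)\<^sup>2 * \<alpha>\<^sup>2)}
         \<ge> 1 - \<delta>"
proof -
  define \<zeta> where "\<zeta> = \<rho> * real B * \<alpha> / (2 * CR)"
  define T where "T = 4/3 * DIM('a) * ln (DIM('a) / \<delta>) / \<zeta>"
  define K where "K = \<rho> * \<tau> + c4 * CR"
  define Z where "Z = Zprim CR B L x y \<rho> R \<eta> N fp fi \<epsilon>"
  define bound where "bound = 4 * CR\<^sup>2 * (real DIM('a))\<^sup>2 * (\<rho> * \<tau> + c4 * CR)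
                    * (ln (real DIM('a) / \<delta>))\<^sup>2 / (\<rho>\<^sup>2 * (real B)\<^sup>2 * \<alpha>\<^sup>2)"
  have \<zeta>: "\<zeta> > 0" unfolding \<zeta>_def using rho CR alpha B by simp
  interpret prob_space "norm_laplace \<zeta> :: 'a measure" by (rule prob_space_norm_laplace[OF \<zeta>])
  have "c4 \<ge> 0" using L'_lip[of 1 0] by simp
  moreover have "\<tau> \<ge> 0"
    using onorm_pos_le[OF has_derivative_bounded_linear[OF R_hess[of fstar]]] R_hess_bound[of fstar] by simp
  ultimately have K: "K \<ge> 0" unfolding K_def using rho CR by simp
  have "bound \<ge> 0" unfolding bound_def K_def[symmetric] using K by simp
  have good_ball: "{\<xi>. norm \<xi> \<le> T} \<subseteq> {\<xi>. Z (fstar + \<xi>) \<le> Z fstar + bound}"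
  proof safe
    fix \<xi> :: 'a
    assume "norm \<xi> \<le> T"
    have "Z (fstar + \<xi>) \<le> Z fstar + K / 2 * (norm \<xi>)\<^sup>2"
      unfolding Z_def K_def using CR rho
      by (intro Zprim_le_at_minimiser[OF B _ _ x y L_deriv L'_lip R_grad R_hess R_hess_bound fstar]) auto
    also have "\<dots> \<le> Z fstar + K / 2 * T\<^sup>2"
      using \<open>norm \<xi> \<le> T\<close> K by (intro add_left_mono mult_left_mono power_mono) auto
    also have "K / 2 * T\<^sup>2 = 8/9 * bound"
      unfolding T_def \<zeta>_def bound_def K_def[symmetric] using CR rho B alpha
      by (simp add: power_divide power_mult_distrib field_simps)
    also have "\<dots> \<le> bound" using \<open>bound \<ge> 0\<close> by simp
    finally show "Z (fstar + \<xi>) \<le> Z fstar + bound" by simp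
  qed
  have "(\<lambda>\<xi>. Z (fstar + \<xi>)) \<in> borel_measurable borel"
    unfolding Z_def by (rule measurable_compose[OF _ borel_measurable_Zprim[OF L_deriv R_grad]]) simp
  then have good_event: "{\<xi>. Z (fstar + \<xi>) \<le> Z fstar + bound} \<in> events"
    using borel_measurable_le[of _ borel "\<lambda>_. Z fstar + bound"] by (simp add: norm_laplace_def)
  have "1 - \<delta> \<le> prob {\<xi>::'a. norm \<xi> \<le> T}"
    unfolding T_def by (rule measure_norm_laplace_norm_le_ge[OF \<zeta> delta])
  also have "\<dots> \<le> prob {\<xi>. Z (fstar + \<xi>) \<le> Z fstar + bound}"
    using good_ball good_event by (rule finite_measure_mono)
  finally show ?thesis unfolding Z_def bound_def \<zeta>_def .
qed

end
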